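(* Let $\phi\in C^4(\mathbb{R})$ be a profile function of a graph-like backward self-similar solution to the planar surface diffusion flow, i.e. $$\frac{\phi(x_1) - x_1\phi'(x_1)}{4\,v(x_1)} = \frac{1}{v}\frac{d}{dx_1}\Big(\frac{1}{v}\frac{dk}{dx_1}\Big)\quad\text{on }\mathbb{R},\qquad v=\sqrt{1+(\phi')^2},\ k=\phi''/v^3.$$ Define $$D_0[\phi](x_1) := \phi(x_1)^2 + x_1^2 - \Big(\int_0^{x_1}\sqrt{1+\phi'(z)^2}\,dz + |\phi(0)|\Big)^2.$$ If $\phi$ is not linear, then $\liminf_{x_1\to+\infty} D_0[\phi](x_1) = -\infty$ or $\liminf_{x_1\to-\infty} D_0[\phi](x_1) = -\infty$.
   Context: The displayed equation is the backward profile equation $\frac{x\cdot\mathbf{n}}{4}=\partial_s^2 k$ for the graph $\Gamma_*=\{(x_1,\phi(x_1))\}$, with upward unit normal $\mathbf{n}=(-\phi',1)/v$, curvature $k$ and arc-length derivative $\partial_s=v^{-1}\partial_{x_1}$. "Linear" means $\phi(x_1)=cx_1+c'$ for constants $c,c'$. *)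

theory Defs
  imports "HOL-Analysis.Analysis" "HOL-Library.Extended_Real" "HOL-Library.Liminf_Limsup"
begin

definition C4 :: "(real \<Rightarrow> real) \<Rightarrow> bool" where
  "C4 f \<longleftrightarrow> (\<forall>j<4. \<forall>x. ((deriv ^^ j) f) differentiable (at x))
              \<and> continuous_on UNIV ((deriv ^^ 4) f)"

definition vfun :: "(real \<Rightarrow> real) \<Rightarrow> real \<Rightarrow> real" where
  "vfun phi x = sqrt (1 + (deriv phi x)\<^sup>2)"

definition curv :: "(real \<Rightarrow> real) \<Rightarrow> real \<Rightarrow> real" where
  "curv phi x = deriv (deriv phi) x / (vfun phi x) ^ 3"

definition backward_profile :: "(real \<Rightarrow> real) \<Rightarrow> bool" where
  "backward_profile phi \<longleftrightarrow>
     (\<forall>x. (phi x - x * deriv phi x) / (4 * vfun phi x)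
        = (1 / vfun phi x) * deriv (\<lambda>y. (1 / vfun phi y) * deriv (curv phi) y) x)"

definition oint0 :: "(real \<Rightarrow> real) \<Rightarrow> real \<Rightarrow> real" where
  "oint0 f x = (if 0 \<le> x then integral {0..x} f else - integral {x..0} f)"

definition D0 :: "(real \<Rightarrow> real) \<Rightarrow> real \<Rightarrow> real" where
  "D0 phi x = (phi x)\<^sup>2 + x\<^sup>2 - (oint0 (\<lambda>z. sqrt (1 + (deriv phi z)\<^sup>2)) x + \<bar>phi 0\<bar>)\<^sup>2"

definition is_linear_fun :: "(real \<Rightarrow> real) \<Rightarrow> bool" where
  "is_linear_fun phi \<longleftrightarrow> (\<exists>c c'. \<forall>x. phi x = c * x + c')"

end

theory Submission
  imports Defs
begin

text \<open>Write \<open>\<gamma>(x) = (x, \<phi>(x))\<close> and \<open>L(x)\<close> for the arc length of the graph between \<open>\<gamma>(0)\<close> and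
  \<open>\<gamma>(x)\<close>, so that \<open>D\<^sub>0(x) = |\<gamma>(x)|\<^sup>2 - (L(x) + |\<gamma>(0)|)\<^sup>2\<close> for \<open>x \<ge> 0\<close>. Chords are shorter than
  arcs, hence \<open>|\<gamma>(x)| \<le> |\<gamma>(0)| + L(x)\<close>. If this is strict at some \<open>x\<^sub>0 \<ge> 0\<close>, the deficit \<open>e > 0\<close>
  persists for \<open>x \<ge> x\<^sub>0\<close> and \<open>D\<^sub>0(x) \<le> e\<^sup>2 - 2 e L(x) \<rightarrow> -\<infinity>\<close>. Otherwise equality holds in every
  triangle inequality along \<open>[0, \<infinity>)\<close>, which forces the half-graph onto a ray from the origin.
  The same argument on \<open>(-\<infinity>, 0]\<close> and differentiability at 0 make \<open>\<phi>\<close> linear.\<close>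

lemma chord_le_arc_length:
  fixes f f' :: "real \<Rightarrow> real"
  assumes deriv: "\<And>x. (f has_real_derivative f' x) (at x)"
    and cont: "continuous_on UNIV f'" and "a \<le> b"
  shows "cmod (Complex b (f b) - Complex a (f a)) \<le> integral {a..b} (\<lambda>x. sqrt (1 + (f' x)\<^sup>2))"
proof -
  let ?\<gamma>' = "\<lambda>x. Complex 1 (f' x)"
  have "((\<lambda>x. Complex x (f x)) has_vector_derivative ?\<gamma>' x) (at x within {a..b})" for x
  proof -
    have "((\<lambda>x. of_real x + \<i> * of_real (f x)) has_vector_derivative 1 + \<i> * of_real (f' x)) (at x)"
      by (intro has_vector_derivative_add has_vector_derivative_mult_right
          has_vector_derivative_of_real[OF DERIV_ident, simplified]
          has_vector_derivative_of_real deriv)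
    then show ?thesis by (auto simp: Complex_eq intro: has_vector_derivative_at_within)
  qed
  then have "(?\<gamma>' has_integral (Complex b (f b) - Complex a (f a))) {a..b}"
    using \<open>a \<le> b\<close> by (intro fundamental_theorem_of_calculus) auto
  moreover have "(\<lambda>x. sqrt (1 + (f' x)\<^sup>2)) integrable_on {a..b}"
    by (intro integrable_continuous_interval continuous_intros continuous_on_subset[OF cont]) auto
  moreover have "cmod (?\<gamma>' x) = sqrt (1 + (f' x)\<^sup>2)" for x
    by (simp add: cmod_def)
  ultimately show ?thesis
    using integral_norm_bound_integral[of ?\<gamma>' "{a..b}"] by (simp add: integral_unique has_integral_integrable)
qed

lemma defect_tendsto_at_bot_if_strict:
  fixes \<gamma> :: "real \<Rightarrow> 'a::real_normed_vector" and L :: "real \<Rightarrow> real"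
  assumes chord: "\<And>a b. 0 \<le> a \<Longrightarrow> a \<le> b \<Longrightarrow> norm (\<gamma> b - \<gamma> a) \<le> L b - L a"
    and L: "filterlim L at_top at_top"
    and "0 \<le> x\<^sub>0" and strict: "norm (\<gamma> x\<^sub>0) < L x\<^sub>0 + norm (\<gamma> 0)"
  shows "filterlim (\<lambda>x. (norm (\<gamma> x))\<^sup>2 - (L x + norm (\<gamma> 0))\<^sup>2) at_bot at_top"
proof -
  define c where "c = norm (\<gamma> 0)"
  define e where "e = L x\<^sub>0 + c - norm (\<gamma> x\<^sub>0)"
  have "e > 0" using strict by (simp add: e_def c_def)
  have bound: "(norm (\<gamma> x))\<^sup>2 - (L x + c)\<^sup>2 \<le> e\<^sup>2 + (- 2 * e) * (L x + c)" if "x \<ge> x\<^sub>0" for x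
  proof -
    have "norm (\<gamma> x) \<le> norm (\<gamma> x\<^sub>0) + norm (\<gamma> x - \<gamma> x\<^sub>0)"
      using norm_triangle_ineq[of "\<gamma> x\<^sub>0" "\<gamma> x - \<gamma> x\<^sub>0"] by simp
    also have "\<dots> \<le> L x + c - e"
      using chord[OF \<open>0 \<le> x\<^sub>0\<close> that] by (simp add: e_def)
    finally have "(norm (\<gamma> x))\<^sup>2 \<le> (L x + c - e)\<^sup>2"
      by (intro power_mono) auto
    then show ?thesis by (simp add: power2_eq_square algebra_simps)
  qed
  have "filterlim (\<lambda>x. L x + c) at_top at_top"
    using filterlim_tendsto_add_at_top[OF tendsto_const L] by (simp add: add.commute)
  then have "filterlim (\<lambda>x. e\<^sup>2 + (- 2 * e) * (L x + c)) at_bot at_top"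
    unfolding filterlim_tendsto_add_at_bot_iff[OF tendsto_const] using \<open>e > 0\<close>
    by (intro filterlim_tendsto_neg_mult_at_bot) auto
  moreover have "\<forall>\<^sub>F x in at_top. (norm (\<gamma> x))\<^sup>2 - (L x + c)\<^sup>2 \<le> e\<^sup>2 + (- 2 * e) * (L x + c)"
    using eventually_ge_at_top by (rule eventually_mono) (rule bound)
  ultimately show ?thesis
    unfolding c_def by (rule filterlim_at_bot_mono)
qed

lemma norm_attains_bound_imp_ray:
  fixes \<gamma> :: "real \<Rightarrow> 'a::real_inner" and L :: "real \<Rightarrow> real"
  assumes chord: "\<And>a b. 0 \<le> a \<Longrightarrow> a \<le> b \<Longrightarrow> norm (\<gamma> b - \<gamma> a) \<le> L b - L a"
    and "L 0 = 0"
    and tight: "\<And>x. 0 \<le> x \<Longrightarrow> L x + norm (\<gamma> 0) \<le> norm (\<gamma> x)"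
    and "0 \<le> a" "a \<le> b"
  shows "norm (\<gamma> a) *\<^sub>R \<gamma> b = norm (\<gamma> b) *\<^sub>R \<gamma> a"
proof -
  have "norm (\<gamma> a) \<le> L a + norm (\<gamma> 0)"
    using norm_triangle_ineq[of "\<gamma> 0" "\<gamma> a - \<gamma> 0"] chord[of 0 a] \<open>0 \<le> a\<close> \<open>L 0 = 0\<close> by simp
  then have "norm (\<gamma> a) + norm (\<gamma> b - \<gamma> a) \<le> norm (\<gamma> a + (\<gamma> b - \<gamma> a))"
    using chord[OF \<open>0 \<le> a\<close> \<open>a \<le> b\<close>] tight[of b] \<open>0 \<le> a\<close> \<open>a \<le> b\<close> by simp
  then have "norm (\<gamma> a + (\<gamma> b - \<gamma> a)) = norm (\<gamma> a) + norm (\<gamma> b - \<gamma> a)"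
    using norm_triangle_ineq[of "\<gamma> a" "\<gamma> b - \<gamma> a"] by linarith
  then have "norm (\<gamma> a) *\<^sub>R (\<gamma> b - \<gamma> a) = norm (\<gamma> b - \<gamma> a) *\<^sub>R \<gamma> a"
    by (rule norm_triangle_eq[THEN iffD1])
  moreover note \<open>norm (\<gamma> a + (\<gamma> b - \<gamma> a)) = _\<close>
  ultimately show ?thesis
    by (simp add: algebra_simps)
qed

lemma graph_on_ray_imp_linear:
  fixes f :: "real \<Rightarrow> real"
  assumes ray: "\<And>a b. 0 \<le> a \<Longrightarrow> a \<le> b \<Longrightarrow>
      cmod (Complex a (f a)) *\<^sub>R Complex b (f b) = cmod (Complex b (f b)) *\<^sub>R Complex a (f a)"
  shows "f 0 = 0" and "\<And>x. 0 \<le> x \<Longrightarrow> f x = f 1 * x"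
proof -
  show "f 0 = 0"
    using ray[of 0 1] by (simp add: complex_eq_iff)
  have proportional: "f a * b = f b * a" if "0 < a" "a \<le> b" for a b
  proof -
    let ?na = "cmod (Complex a (f a))" and ?nb = "cmod (Complex b (f b))"
    have "?na * b = ?nb * a" "?na * f b = ?nb * f a"
      using ray[of a b] that by (simp_all add: complex_eq_iff)
    then have "?nb * (f a * b) = ?nb * (f b * a)"
      by (metis mult.assoc mult.commute)
    moreover have "?nb \<noteq> 0"
      using that by (simp add: complex_eq_iff)
    ultimately show ?thesis by simp
  qed
  show "f x = f 1 * x" if "0 \<le> x" for x
    using \<open>f 0 = 0\<close> proportional[of x 1] proportional[of 1 x] that by (cases "x = 0"; cases "x \<le> 1") auto
qed

lemma graph_defect_tendsto_at_bot_or_linear: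
  fixes f f' :: "real \<Rightarrow> real"
  assumes deriv: "\<And>x. (f has_real_derivative f' x) (at x)" and cont: "continuous_on UNIV f'"
  defines "L \<equiv> \<lambda>x. integral {0..x} (\<lambda>z. sqrt (1 + (f' z)\<^sup>2))"
  shows "filterlim (\<lambda>x. (f x)\<^sup>2 + x\<^sup>2 - (L x + \<bar>f 0\<bar>)\<^sup>2) at_bot at_top
      \<or> (f 0 = 0 \<and> (\<forall>x\<ge>0. f x = f 1 * x))"
proof -
  define \<gamma> where "\<gamma> x = Complex x (f x)" for x
  have norm_\<gamma>: "(norm (\<gamma> x))\<^sup>2 = (f x)\<^sup>2 + x\<^sup>2" "norm (\<gamma> 0) = \<bar>f 0\<bar>" for x
    by (simp_all add: \<gamma>_def cmod_def)
  have chord: "norm (\<gamma> b - \<gamma> a) \<le> L b - L a" if "0 \<le> a" "a \<le> b" for a b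
  proof -
    have int: "(\<lambda>z. sqrt (1 + (f' z)\<^sup>2)) integrable_on {0..b}"
      by (intro integrable_continuous_interval continuous_intros continuous_on_subset[OF cont]) auto
    have "L b = L a + integral {a..b} (\<lambda>z. sqrt (1 + (f' z)\<^sup>2))"
      unfolding L_def using that Henstock_Kurzweil_Integration.integral_combine[OF _ _ int] by simp
    then show ?thesis
      using chord_le_arc_length[OF deriv cont \<open>a \<le> b\<close>] by (simp add: \<gamma>_def)
  qed
  have "L 0 = 0" by (simp add: L_def)
  have "x \<le> L x" if "0 \<le> x" for x
    using chord[of 0 x] abs_Re_le_cmod[of "\<gamma> x - \<gamma> 0"] that \<open>L 0 = 0\<close> by (simp add: \<gamma>_def)
  then have "filterlim L at_top at_top"
    by (intro filterlim_at_top_mono[OF filterlim_ident]) (auto intro: eventually_mono[OF eventually_ge_at_top])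
  show ?thesis
  proof (cases "\<exists>x\<^sub>0\<ge>0. norm (\<gamma> x\<^sub>0) < L x\<^sub>0 + norm (\<gamma> 0)")
    case True
    then obtain x\<^sub>0 where "0 \<le> x\<^sub>0" "norm (\<gamma> x\<^sub>0) < L x\<^sub>0 + norm (\<gamma> 0)" by blast
    from defect_tendsto_at_bot_if_strict[of \<gamma> L, OF chord \<open>filterlim L at_top at_top\<close> this]
    show ?thesis by (simp add: norm_\<gamma>)
  next
    case False
    then have "L x + norm (\<gamma> 0) \<le> norm (\<gamma> x)" if "0 \<le> x" for x
      using that by (simp add: not_less)
    from norm_attains_bound_imp_ray[of \<gamma> L, OF chord \<open>L 0 = 0\<close> this]
    have "cmod (Complex a (f a)) *\<^sub>R Complex b (f b) = cmod (Complex b (f b)) *\<^sub>R Complex a (f a)"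
      if "0 \<le> a" "a \<le> b" for a b
      using that by (simp add: \<gamma>_def)
    from graph_on_ray_imp_linear[OF this] show ?thesis by blast
  qed
qed

lemma half_line_slopes_eq_if_differentiable:
  fixes f :: "real \<Rightarrow> real"
  assumes "f differentiable at 0"
    and right: "\<And>x. 0 \<le> x \<Longrightarrow> f x = a * x" and left: "\<And>x. x \<le> 0 \<Longrightarrow> f x = b * x"
  shows "a = b"
proof -
  let ?q = "\<lambda>h. (f (0 + h) - f 0) / h"
  obtain d where "(?q \<longlongrightarrow> d) (at 0)"
    using assms(1) by (auto simp: real_differentiable_def DERIV_def)
  then have right_lim: "(?q \<longlongrightarrow> d) (at_right 0)" and left_lim: "(?q \<longlongrightarrow> d) (at_left 0)"
    by (auto intro: tendsto_mono at_le)
  have "\<forall>\<^sub>F h in at_right 0. ?q h = a"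
    using eventually_at_right_less[of 0] by eventually_elim (simp add: right)
  then have "(?q \<longlongrightarrow> a) (at_right 0)"
    by (rule tendsto_eventually)
  with right_lim have "d = a"
    by (rule tendsto_unique[OF trivial_limit_at_right_real])
  have "\<forall>\<^sub>F h in at_left (0::real). h < 0"
    by (simp add: eventually_at_filter)
  then have "\<forall>\<^sub>F h in at_left 0. ?q h = b"
    by eventually_elim (simp add: left)
  then have "(?q \<longlongrightarrow> b) (at_left 0)"
    by (rule tendsto_eventually)
  with left_lim have "d = b"
    by (rule tendsto_unique[OF trivial_limit_at_left_real])
  with \<open>d = a\<close> show ?thesis by simp
qed

lemma Liminf_ereal_eq_MInfty_if_at_bot:
  fixes g :: "'a \<Rightarrow> real"
  assumes "F \<noteq> bot" and "filterlim g at_bot F"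
  shows "Liminf F (\<lambda>x. ereal (g x)) = -\<infinity>"
  using assms ereal_tendsto_simps2(3)[of g F] by (intro lim_imp_Liminf) (auto simp: comp_def)

lemma C4_imp_continuously_differentiable:
  assumes "C4 phi"
  shows "\<And>x. (phi has_real_derivative deriv phi x) (at x)" and "continuous_on UNIV (deriv phi)"
proof -
  have "\<forall>x. (deriv ^^ j) phi differentiable (at x)" if "j < 4" for j
    using assms that unfolding C4_def by blast
  from this[of 0] this[of 1] have "\<And>x. phi differentiable at x" "\<And>x. deriv phi differentiable at x"
    by simp_all
  then show "\<And>x. (phi has_real_derivative deriv phi x) (at x)" and "continuous_on UNIV (deriv phi)"
    by (auto simp: DERIV_deriv_iff_real_differentiable
        intro!: continuous_at_imp_continuous_on differentiable_imp_continuous_within)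
qed

lemma D0_tendsto_at_top_or_linear:
  assumes deriv: "\<And>x. (phi has_real_derivative deriv phi x) (at x)"
    and cont: "continuous_on UNIV (deriv phi)"
  shows "filterlim (D0 phi) at_bot at_top \<or> (phi 0 = 0 \<and> (\<forall>x\<ge>0. phi x = phi 1 * x))"
proof -
  have eq: "\<forall>\<^sub>F x in at_top. (phi x)\<^sup>2 + x\<^sup>2 - (integral {0..x} (\<lambda>z. sqrt (1 + (deriv phi z)\<^sup>2)) + \<bar>phi 0\<bar>)\<^sup>2
      = D0 phi x"
    using eventually_ge_at_top[of 0] by eventually_elim (simp add: D0_def oint0_def)
  then show ?thesis
    using graph_defect_tendsto_at_bot_or_linear[OF deriv cont] filterlim_cong[OF refl refl eq] by simp
qed

lemma D0_tendsto_at_bot_or_linear: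
  assumes deriv: "\<And>x. (phi has_real_derivative deriv phi x) (at x)"
    and cont: "continuous_on UNIV (deriv phi)" and "phi 0 = 0"
  shows "filterlim (D0 phi) at_bot at_bot \<or> (\<forall>x\<ge>0. phi (- x) = phi (- 1) * x)"
proof -
  define psi where "psi x = phi (- x)" for x
  have "(psi has_real_derivative - deriv phi (- x)) (at x)" for x
    unfolding psi_def using deriv[of "- x"] DERIV_mirror by blast
  moreover have "continuous_on UNIV (\<lambda>x. - deriv phi (- x))"
    by (intro continuous_intros continuous_on_compose2[OF cont]) auto
  ultimately have "filterlim (\<lambda>x. (psi x)\<^sup>2 + x\<^sup>2
      - (integral {0..x} (\<lambda>z. sqrt (1 + (- deriv phi (- z))\<^sup>2)) + \<bar>psi 0\<bar>)\<^sup>2) at_bot at_top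
    \<or> (\<forall>x\<ge>0. psi x = psi 1 * x)"
    using graph_defect_tendsto_at_bot_or_linear[of psi "\<lambda>x. - deriv phi (- x)"] by blast
  \<comment> \<open>For \<open>x < 0\<close>, \<open>D0\<close> contains \<open>(|\<phi>(0)| - L)\<^sup>2\<close>; it is the mirrored defect only because \<open>\<phi>(0) = 0\<close>.\<close>
  moreover have eq: "\<forall>\<^sub>F x in at_top. (psi x)\<^sup>2 + x\<^sup>2
      - (integral {0..x} (\<lambda>z. sqrt (1 + (- deriv phi (- z))\<^sup>2)) + \<bar>psi 0\<bar>)\<^sup>2 = D0 phi (- x)"
    using eventually_ge_at_top[of 0]
  proof eventually_elim
    case (elim x)
    have "integral {0..x} (\<lambda>z. sqrt (1 + (deriv phi (- z))\<^sup>2)) = integral {- x..0} (\<lambda>z. sqrt (1 + (deriv phi z)\<^sup>2))"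
      using Henstock_Kurzweil_Integration.integral_reflect_real[of 0 "- x" "\<lambda>z. sqrt (1 + (deriv phi z)\<^sup>2)"]
      by (simp only: minus_zero minus_minus)
    with elim show ?case
      by (simp add: D0_def oint0_def psi_def \<open>phi 0 = 0\<close>)
  qed
  ultimately show ?thesis
    unfolding filterlim_at_bot_mirror using filterlim_cong[OF refl refl eq] by (simp add: psi_def)
qed

theorem mainTheorem9:
  fixes phi :: "real \<Rightarrow> real"
  assumes "C4 phi"
    and "backward_profile phi"
    and "\<not> is_linear_fun phi"
  shows "Liminf at_top (\<lambda>x. ereal (D0 phi x)) = -\<infinity>
       \<or> Liminf at_bot (\<lambda>x. ereal (D0 phi x)) = -\<infinity>"
proof (rule ccontr)
  assume bounded: "\<not> ?thesis"
  note C1 = C4_imp_continuously_differentiable[OF \<open>C4 phi\<close>]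
  have "\<not> filterlim (D0 phi) at_bot at_top" and "\<not> filterlim (D0 phi) at_bot at_bot"
    using bounded Liminf_ereal_eq_MInfty_if_at_bot[of _ "D0 phi"] by auto
  then have "phi 0 = 0" and right: "\<And>x. 0 \<le> x \<Longrightarrow> phi x = phi 1 * x"
    and "\<forall>x\<ge>0. phi (- x) = phi (- 1) * x"
    using D0_tendsto_at_top_or_linear[OF C1] D0_tendsto_at_bot_or_linear[OF C1] by blast+
  then have left: "\<And>x. x \<le> 0 \<Longrightarrow> phi x = - phi (- 1) * x"
    by (metis minus_minus neg_0_le_iff_le mult_minus_right mult_minus_left)
  have "phi 1 = - phi (- 1)"
    using half_line_slopes_eq_if_differentiable[OF _ right left] C1(1) real_differentiable_def by blast
  then have "is_linear_fun phi"
    unfolding is_linear_fun_def using right left by (metis add_0_right linorder_linear)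
  with \<open>\<not> is_linear_fun phi\<close> show False ..
qed

end
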